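(* Let $X$ be a Banach space and let $(C_n)_{n\in\mathbb N}$ be a nested (i.e. $C_{n+1}\subset C_n$) sequence of bounded, closed, convex subsets of $X$. Suppose that $K=\bigcap_n\overline{C_n}^{w^*}$ is metrizable in the weak* topology. Then: (1) every $g\in K$ is the weak*-limit of a sequence $(c_n)$ with $c_n\in C_n$ for each $n$; (2) every sequence $(c_n)$ with $c_n\in C_n$ for each $n$ admits a subsequence that is weak*-convergent in $X^{**}$.
   Context: $X$ is regarded as a subspace of $X^{**}$ via the canonical embedding, and $\overline{A}^{w^*}$ denotes the weak*-closure in $X^{**}$ of $A\subset X$. *)

theory Defs
  imports "HOL-Analysis.Analysis"
begin

type_synonym 'a bidual = "('a \<Rightarrow>\<^sub>L real) \<Rightarrow>\<^sub>L real"

definition canon :: "'a::real_normed_vector \<Rightarrow> 'a bidual" where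
  "canon x = Blinfun (\<lambda>f. blinfun_apply f x)"

text \<open>Weak* topology on X**: the coarsest topology making every evaluation
  phi |-> phi f (f in X*) continuous.\<close>
definition wstar :: "('a::real_normed_vector) bidual topology" where
  "wstar = pullback_topology UNIV (\<lambda>\<phi> f. blinfun_apply \<phi> f)
             (product_topology (\<lambda>_. euclideanreal) UNIV)"

definition wstar_closure :: "'a::real_normed_vector set \<Rightarrow> 'a bidual set" where
  "wstar_closure A = wstar closure_of (canon ` A)"

end

theory Submission
  imports Defs
begin

text \<open>By Banach--Alaoglu (Tychonoff applied to a product of compact intervals), a bounded sequence
  of X has weak* cluster points along every infinite set of indices; if c n \<in> C n these cluster
  points lie in K. Metrizability of K makes each g \<in> K the only point of K lying in countably many
  closed basic weak* neighbourhoods of g. A sequence c n \<in> C n that eventually enters each of these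
  neighbourhoods converges weak* to g: otherwise some functional stays \<epsilon> away from its value at g
  along an infinite set of indices, and a cluster point along that set would be a second such point
  of K. For (1) choose c n in the n-th neighbourhood, using g \<in> K; for (2) choose a subsequence in the
  neighbourhoods of a cluster point of c.\<close>

lemma canon_apply [simp]: "blinfun_apply (canon x) f = blinfun_apply f x"
  unfolding canon_def
  by (subst bounded_linear_Blinfun_apply)
     (auto intro: bounded_bilinear.bounded_linear_left[OF bounded_bilinear_blinfun_apply])

lemma wstar_eq_pullback: "wstar = pullback_topology UNIV blinfun_apply euclidean"
  by (simp add: wstar_def euclidean_product_topology)

lemma topspace_wstar [simp]: "topspace wstar = UNIV"
  by (simp add: wstar_eq_pullback topspace_pullback_topology)

lemma openin_wstar: "openin wstar U \<longleftrightarrow> (\<exists>V. open V \<and> U = blinfun_apply -` V)"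
  by (simp add: wstar_eq_pullback openin_pullback_topology)

lemma closedin_wstar_vimage:
  "closed A \<Longrightarrow> closedin wstar (blinfun_apply -` A)"
  unfolding closedin_def openin_wstar by (auto intro!: exI[of _ "- A"])

lemma limitin_wstar_iff:
  "limitin wstar s g F \<longleftrightarrow> (\<forall>f. ((\<lambda>n. blinfun_apply (s n) f) \<longlongrightarrow> blinfun_apply g f) F)"
proof -
  have "limitin wstar s g F \<longleftrightarrow> ((\<lambda>n. blinfun_apply (s n)) \<longlongrightarrow> blinfun_apply g) F"
    unfolding limitin_def tendsto_def openin_wstar by auto
  also have "\<dots> \<longleftrightarrow> (\<forall>f. ((\<lambda>n. blinfun_apply (s n) f) \<longlongrightarrow> blinfun_apply g f) F)"
    using limitin_componentwise[of "\<lambda>_. euclideanreal" UNIV]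
    by (simp add: euclidean_product_topology)
  finally show ?thesis .
qed

definition wstar_ball ::
    "'a::real_normed_vector bidual \<Rightarrow> ('a \<Rightarrow>\<^sub>L real) set \<Rightarrow> real \<Rightarrow> 'a bidual set"
  where "wstar_ball g F e = {\<phi>. \<forall>f\<in>F. \<bar>blinfun_apply \<phi> f - blinfun_apply g f\<bar> < e}"

definition wstar_cball ::
    "'a::real_normed_vector bidual \<Rightarrow> ('a \<Rightarrow>\<^sub>L real) set \<Rightarrow> real \<Rightarrow> 'a bidual set"
  where "wstar_cball g F e = {\<phi>. \<forall>f\<in>F. \<bar>blinfun_apply \<phi> f - blinfun_apply g f\<bar> \<le> e}"

lemma centre_in_wstar_ball [simp]: "g \<in> wstar_ball g F e \<longleftrightarrow> F = {} \<or> 0 < e"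
  by (auto simp: wstar_ball_def)

lemma wstar_ball_subset_cball: "wstar_ball g F e \<subseteq> wstar_cball g F e"
  by (auto simp: wstar_ball_def wstar_cball_def)

lemma openin_wstar_ball: "finite F \<Longrightarrow> openin wstar (wstar_ball g F e)"
proof -
  assume "finite F"
  then have "open {h. \<forall>f\<in>F. h (id f) \<in> ball (blinfun_apply g f) e}"
    by (intro product_topology_basis') auto
  moreover have "wstar_ball g F e = blinfun_apply -` {h. \<forall>f\<in>F. h (id f) \<in> ball (blinfun_apply g f) e}"
    by (auto simp: wstar_ball_def dist_real_def abs_minus_commute)
  ultimately show ?thesis
    unfolding openin_wstar by blast
qed

lemma closedin_wstar_cball: "closedin wstar (wstar_cball g F e)"
proof -
  have "closed (\<Inter>f\<in>F. {h. \<bar>h f - blinfun_apply g f\<bar> \<le> e})"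
    by (intro closed_INT ballI closed_Collect_le continuous_intros continuous_on_product_coordinates)
  moreover have "wstar_cball g F e = blinfun_apply -` (\<Inter>f\<in>F. {h. \<bar>h f - blinfun_apply g f\<bar> \<le> e})"
    by (auto simp: wstar_cball_def)
  ultimately show ?thesis
    by (simp add: closedin_wstar_vimage)
qed

lemma openin_wstar_contains_ball:
  assumes "openin wstar U" "g \<in> U"
  obtains F e where "finite F" "0 < e" "wstar_ball g F e \<subseteq> U"
proof -
  obtain V where V: "open V" "U = blinfun_apply -` V"
    using assms(1) openin_wstar by blast
  then obtain W where W: "blinfun_apply g \<in> Pi\<^sub>E UNIV W" "\<And>i. open (W i)"
      "finite {i. W i \<noteq> UNIV}" "Pi\<^sub>E UNIV W \<subseteq> V"
    using product_topology_open_contains_basis[of "\<lambda>_. euclideanreal" UNIV V "blinfun_apply g"] assms(2)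
    by (auto simp: euclidean_product_topology)
  define F where "F = {i. W i \<noteq> UNIV}"
  have "\<forall>\<^sub>F e in at_right 0. ball (blinfun_apply g i) e \<subseteq> W i" for i
  proof -
    have "blinfun_apply g i \<in> W i"
      using W(1) by (simp add: PiE_iff)
    then obtain r where "0 < r" "ball (blinfun_apply g i) r \<subseteq> W i"
      using W(2)[of i] open_contains_ball by blast
    moreover have "\<forall>\<^sub>F e in at_right 0. e < r"
      using \<open>0 < r\<close> eventually_at_right_field by blast
    ultimately show ?thesis
      by (auto elim!: eventually_mono)
  qed
  then have "\<forall>\<^sub>F e in at_right 0. 0 < e \<and> (\<forall>i\<in>F. ball (blinfun_apply g i) e \<subseteq> W i)"
    using W(3) unfolding F_def by (intro eventually_conj eventually_ball_finite eventually_at_right_less) auto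
  then obtain e where e: "0 < e" "\<And>i. i \<in> F \<Longrightarrow> ball (blinfun_apply g i) e \<subseteq> W i"
    using eventually_happens'[OF trivial_limit_at_right_real] by blast
  have "wstar_ball g F e \<subseteq> U"
  proof
    fix \<phi> assume "\<phi> \<in> wstar_ball g F e"
    have "blinfun_apply \<phi> i \<in> W i" for i
    proof (cases "i \<in> F")
      case True
      with \<open>\<phi> \<in> wstar_ball g F e\<close> have "blinfun_apply \<phi> i \<in> ball (blinfun_apply g i) e"
        by (simp add: wstar_ball_def dist_real_def abs_minus_commute)
      with e(2) True show ?thesis by blast
    qed (simp add: F_def)
    then show "\<phi> \<in> U"
      using W(4) V(2) by (auto simp: PiE_iff)
  qed
  with that W(3) e(1) show thesis
    by (simp add: F_def)
qed

lemma metrizable_subtopology_point_Inter_open: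
  assumes "metrizable_space (subtopology X K)" "g \<in> topspace X" "g \<in> K"
  obtains U where "\<And>m::nat. openin X (U m)" "\<And>m. g \<in> U m"
    "\<And>h. h \<in> K \<Longrightarrow> (\<And>m. h \<in> U m) \<Longrightarrow> h = g"
proof -
  obtain M d where "Metric_space M d" and top: "subtopology X K = Metric_space.mtopology M d"
    using assms(1) unfolding metrizable_space_def by blast
  interpret Metric_space M d by fact
  have M: "M = topspace X \<inter> K"
    using top by (metis topspace_mtopology topspace_subtopology)
  have "\<exists>U. openin X U \<and> mball g (1 / Suc m) = U \<inter> K" for m
  proof -
    have "openin (subtopology X K) (mball g (1 / Suc m))"
      by (simp add: top)
    then show ?thesis
      by (auto simp: openin_subtopology)
  qed
  then obtain U where U: "\<And>m. openin X (U m)" "\<And>m. mball g (1 / Suc m) = U m \<inter> K"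
    by metis
  show thesis
  proof (rule that[OF U(1)])
    have "g \<in> M"
      using assms(2,3) M by simp
    then have "g \<in> mball g (1 / Suc m)" for m
      by simp
    then show "g \<in> U m" for m
      using U(2) by blast
    fix h assume h: "h \<in> K" "\<And>m. h \<in> U m"
    have "h \<in> mball g (1 / Suc m)" for m
      using U(2) h by blast
    then have "h \<in> M" and small: "d g h < 1 / Suc m" for m
      by simp_all
    have "\<not> 0 < d g h"
    proof
      assume "0 < d g h"
      then obtain m where "1 / Suc m < d g h"
        by (rule nat_approx_posE)
      with small[of m] show False
        by simp
    qed
    then show "h = g"
      using \<open>h \<in> M\<close> \<open>g \<in> M\<close> nonneg[of g h] by simp
  qed
qed

lemma metrizable_wstar_separating_cballs:
  assumes "metrizable_space (subtopology wstar K)" "g \<in> K"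
  obtains F e where "\<And>m::nat. finite (F m)" "\<And>m. 0 < e m"
    "\<And>h. h \<in> K \<Longrightarrow> (\<And>m. h \<in> wstar_cball g (F m) (e m)) \<Longrightarrow> h = g"
proof -
  obtain U where U: "\<And>m::nat. openin wstar (U m)" "\<And>m. g \<in> U m"
      "\<And>h. h \<in> K \<Longrightarrow> (\<And>m. h \<in> U m) \<Longrightarrow> h = g"
    using metrizable_subtopology_point_Inter_open[OF assms(1) _ assms(2)] by auto
  have "\<exists>F e. finite F \<and> 0 < e \<and> wstar_ball g F e \<subseteq> U m" for m
    using openin_wstar_contains_ball[OF U(1,2)] by metis
  then obtain F e where Fe: "\<And>m. finite (F m)" "\<And>m. 0 < e m" "\<And>m. wstar_ball g (F m) (e m) \<subseteq> U m"
    by metis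
  have cball_sub: "wstar_cball g (F m) (e m / 2) \<subseteq> U m" for m
    using Fe(2,3)[of m] by (force simp: wstar_cball_def wstar_ball_def)
  show thesis
  proof (rule that[of F "\<lambda>m. e m / 2"])
    fix h assume "h \<in> K" "\<And>m. h \<in> wstar_cball g (F m) (e m / 2)"
    with cball_sub show "h = g"
      using U(3) by blast
  qed (use Fe in auto)
qed

definition wstar_cluster :: "(nat \<Rightarrow> 'a::real_normed_vector bidual) \<Rightarrow> nat set \<Rightarrow> 'a bidual set"
  where "wstar_cluster t I = (\<Inter>N. wstar closure_of (t ` {n\<in>I. N \<le> n}))"

lemma wstar_cluster_subset_closedin:
  assumes "closedin wstar A" "\<And>n. n \<in> I \<Longrightarrow> N \<le> n \<Longrightarrow> t n \<in> A"
  shows "wstar_cluster t I \<subseteq> A"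
proof -
  have "wstar closure_of (t ` {n\<in>I. N \<le> n}) \<subseteq> A"
    using assms by (intro closure_of_minimal) auto
  then show ?thesis
    unfolding wstar_cluster_def by blast
qed

lemma norm_canon_le: "norm (canon x) \<le> norm x"
proof (rule norm_blinfun_bound)
  show "norm (blinfun_apply (canon x) f) \<le> norm x * norm f" for f
    using norm_blinfun[of f x] by (simp add: mult.commute)
qed simp

lemma bounded_range_canon: "bounded (range s) \<Longrightarrow> bounded (range (\<lambda>n. canon (s n)))"
  by (auto simp: bounded_iff intro: order_trans[OF norm_canon_le])

lemma bounded_linear_in_closure_blinfun_apply:
  fixes S :: "('a::real_normed_vector \<Rightarrow>\<^sub>L 'b::real_normed_vector) set"
  assumes "\<And>T. T \<in> S \<Longrightarrow> norm T \<le> B" and "q \<in> closure (blinfun_apply ` S)"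
  shows "bounded_linear q"
proof -
  have closed_property: "P q" if "closed {h. P h}" "\<And>T. T \<in> S \<Longrightarrow> P (blinfun_apply T)" for P
    using assms(2) closure_minimal[of "blinfun_apply ` S" "{h. P h}"] that by blast
  show ?thesis
  proof (rule bounded_linear_intro)
    show "q (x + y) = q x + q y" for x y
      by (rule closed_property[where P="\<lambda>h. h (x + y) = h x + h y"])
        (intro closed_Collect_eq continuous_intros continuous_on_product_coordinates,
          simp add: blinfun.add_right)
    show "q (r *\<^sub>R x) = r *\<^sub>R q x" for r x
      by (rule closed_property[where P="\<lambda>h. h (r *\<^sub>R x) = r *\<^sub>R h x"])
        (intro closed_Collect_eq continuous_intros continuous_on_product_coordinates,
          simp add: blinfun.scaleR_right)
    show "norm (q x) \<le> norm x * B" for x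
    proof (rule closed_property[where P="\<lambda>h. norm (h x) \<le> norm x * B"])
      show "closed {h. norm (h x) \<le> norm x * B}"
        by (intro closed_Collect_le continuous_intros continuous_on_product_coordinates)
      fix T assume "T \<in> S"
      then have "norm T * norm x \<le> B * norm x"
        using assms(1) by (simp add: mult_right_mono)
      then show "norm (blinfun_apply T x) \<le> norm x * B"
        using norm_blinfun[of T x] by (simp add: mult.commute)
    qed
  qed
qed

lemma in_wstar_closure_of_if_closure:
  assumes "blinfun_apply \<phi> \<in> closure (blinfun_apply ` A)"
  shows "\<phi> \<in> wstar closure_of A"
  unfolding in_closure_of
proof (intro conjI allI impI)
  fix T assume "\<phi> \<in> T \<and> openin wstar T"
  then obtain V where "open V" "blinfun_apply \<phi> \<in> V" "T = blinfun_apply -` V"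
    unfolding openin_wstar by blast
  then show "\<exists>y. y \<in> A \<and> y \<in> T"
    using assms open_Int_closure_eq_empty[of V "blinfun_apply ` A"] by blast
qed simp

lemma wstar_cluster_nonempty:
  fixes t :: "nat \<Rightarrow> 'a::real_normed_vector bidual"
  assumes "bounded (range t)" "infinite I"
  shows "wstar_cluster t I \<noteq> {}"
proof -
  obtain B where B: "\<And>n. norm (t n) \<le> B"
    using assms(1) by (auto simp: bounded_iff)
  define A where "A N = blinfun_apply ` t ` {n\<in>I. N \<le> n}" for N
  define P where "P = {h. \<forall>f. \<bar>h f\<bar> \<le> B * norm (f :: 'a \<Rightarrow>\<^sub>L real)}"
  have "P = (\<Pi>\<^sub>E f\<in>UNIV. cball 0 (B * norm f))"
    by (auto simp: P_def PiE_iff)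
  then have "compact P"
    using compactin_PiE[of "\<lambda>_. euclideanreal" UNIV "\<lambda>f. cball 0 (B * norm f)"]
    by (simp add: euclidean_product_topology)
  have "A N \<subseteq> P" for N
  proof
    fix h assume "h \<in> A N"
    then obtain n where h: "h = blinfun_apply (t n)"
      unfolding A_def by blast
    have "\<bar>blinfun_apply (t n) f\<bar> \<le> B * norm f" for f
      using norm_blinfun[of "t n" f] B[of n] by (simp add: mult_right_mono order_trans)
    then show "h \<in> P"
      unfolding P_def h by blast
  qed
  moreover have "closed P"
    unfolding P_def
    by (intro closed_Collect_all closed_Collect_le continuous_intros continuous_on_product_coordinates)
  ultimately have closure_sub: "closure (A N) \<subseteq> P" for N
    by (rule closure_minimal)
  have "(\<Inter>N. closure (A N)) \<noteq> {}"
  proof (rule compact_space_imp_nest)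
    show "compact_space (top_of_set P)"
      using \<open>compact P\<close> by (simp add: compact_space_subtopology)
    show "closedin (top_of_set P) (closure (A N))" for N
      using closure_sub by (simp add: closed_subset)
    show "closure (A N) \<noteq> {}" for N
      using assms(2) unfolding A_def infinite_nat_iff_unbounded_le by auto
    show "decseq (\<lambda>N. closure (A N))"
      unfolding decseq_def A_def by (intro allI impI closure_mono image_mono) auto
  qed
  then obtain q where q: "\<And>N. q \<in> closure (A N)"
    by blast
  have "bounded_linear q"
    using bounded_linear_in_closure_blinfun_apply[of "t ` {n\<in>I. 0 \<le> n}" B] B q[of 0]
    unfolding A_def by blast
  then have "blinfun_apply (Blinfun q) = q"
    by (rule bounded_linear_Blinfun_apply)
  then have "Blinfun q \<in> wstar closure_of (t ` {n\<in>I. N \<le> n})" for N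
    using q[of N] unfolding A_def by (simp add: in_wstar_closure_of_if_closure)
  then show ?thesis
    unfolding wstar_cluster_def by blast
qed

lemma wstar_cluster_subset_Inter_wstar_closure:
  assumes "decseq C" "\<And>n. s n \<in> C n"
  shows "wstar_cluster (\<lambda>n. canon (s n)) I \<subseteq> (\<Inter>n. wstar_closure (C n))"
proof (intro INT_greatest)
  fix N
  have "canon (s n) \<in> wstar_closure (C N)" if "N \<le> n" for n
  proof -
    have "s n \<in> C N"
      using assms that by (auto simp: decseq_def)
    then show ?thesis
      unfolding wstar_closure_def using closure_of_subset[of "canon ` C N" wstar] by auto
  qed
  then show "wstar_cluster (\<lambda>n. canon (s n)) I \<subseteq> wstar_closure (C N)"
    by (intro wstar_cluster_subset_closedin) (auto simp: wstar_closure_def)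
qed

lemma limitin_wstar_if_unique_cluster:
  assumes "bounded (range t)"
    and unique: "\<And>I \<phi>. infinite I \<Longrightarrow> \<phi> \<in> wstar_cluster t I \<Longrightarrow> \<phi> = g"
  shows "limitin wstar t g sequentially"
  unfolding limitin_wstar_iff
proof
  fix f
  show "((\<lambda>n. blinfun_apply (t n) f) \<longlongrightarrow> blinfun_apply g f) sequentially"
  proof (rule ccontr)
    assume "\<not> ((\<lambda>n. blinfun_apply (t n) f) \<longlongrightarrow> blinfun_apply g f) sequentially"
    then obtain \<epsilon> where "0 < \<epsilon>" and far: "\<And>N. \<exists>n\<ge>N. t n \<notin> wstar_ball g {f} \<epsilon>"
      unfolding LIMSEQ_def dist_real_def by (auto simp: wstar_ball_def not_less)
    define I where "I = {n. t n \<notin> wstar_ball g {f} \<epsilon>}"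
    have "infinite I"
      unfolding I_def infinite_nat_iff_unbounded_le using far by blast
    then obtain \<phi> where \<phi>: "\<phi> \<in> wstar_cluster t I"
      using wstar_cluster_nonempty[OF assms(1)] by blast
    have "closedin wstar (topspace wstar - wstar_ball g {f} \<epsilon>)"
      by (intro closedin_diff closedin_topspace openin_wstar_ball) simp
    then have "wstar_cluster t I \<subseteq> topspace wstar - wstar_ball g {f} \<epsilon>"
      by (rule wstar_cluster_subset_closedin) (simp add: I_def)
    then have "\<phi> \<notin> wstar_ball g {f} \<epsilon>"
      using \<phi> by blast
    moreover have "\<phi> = g"
      using unique \<open>infinite I\<close> \<phi> by blast
    ultimately show False
      using \<open>0 < \<epsilon>\<close> by simp
  qed
qed

lemma limitin_wstar_if_separating_cballs:
  fixes C :: "nat \<Rightarrow> 'a::real_normed_vector set"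
  assumes "decseq C" "bounded (C 0)" "\<And>n. s n \<in> C n"
    and separating: "\<And>h. h \<in> (\<Inter>n. wstar_closure (C n)) \<Longrightarrow>
      (\<And>m. h \<in> wstar_cball g (F m) (e m)) \<Longrightarrow> h = g"
    and near: "\<And>m n. m \<le> n \<Longrightarrow> canon (s n) \<in> wstar_ball g (F m) (e m)"
  shows "limitin wstar (\<lambda>n. canon (s n)) g sequentially"
proof (rule limitin_wstar_if_unique_cluster)
  have "range s \<subseteq> C 0"
    using assms(1,3) by (auto simp: decseq_def)
  then show "bounded (range (\<lambda>n. canon (s n)))"
    by (intro bounded_range_canon bounded_subset[OF assms(2)])
  fix I \<phi> assume \<phi>: "\<phi> \<in> wstar_cluster (\<lambda>n. canon (s n)) I"
  show "\<phi> = g"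
  proof (rule separating)
    show "\<phi> \<in> (\<Inter>n. wstar_closure (C n))"
      using wstar_cluster_subset_Inter_wstar_closure[OF assms(1,3)] \<phi> by blast
    have "wstar_cluster (\<lambda>n. canon (s n)) I \<subseteq> wstar_cball g (F m) (e m)" for m
      by (rule wstar_cluster_subset_closedin[OF closedin_wstar_cball, where N=m])
        (use near wstar_ball_subset_cball in blast)
    then show "\<phi> \<in> wstar_cball g (F m) (e m)" for m
      using \<phi> by blast
  qed
qed

lemma strict_mono_choice:
  assumes "\<And>n N. \<exists>i\<ge>N. P n i"
  obtains r :: "nat \<Rightarrow> nat" where "strict_mono r" "\<And>n. P n (r n)"
proof -
  define pick where "pick n N = (SOME i. N \<le> i \<and> P n i)" for n N
  have pick: "N \<le> pick n N" "P n (pick n N)" for n N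
    unfolding pick_def using someI_ex[OF assms[where n=n and N=N]] by simp_all
  define r where "r = rec_nat (pick 0 0) (\<lambda>n rn. pick (Suc n) (Suc rn))"
  have r_Suc: "r (Suc n) = pick (Suc n) (Suc (r n))" for n
    by (simp add: r_def)
  show thesis
  proof (rule that)
    show "strict_mono r"
      unfolding strict_mono_Suc_iff using pick(1) r_Suc by (metis Suc_le_lessD)
    show "P n (r n)" for n
      using pick(2) r_Suc by (cases n) (simp_all add: r_def)
  qed
qed

lemma wstar_closure_ofE:
  fixes n :: nat
  assumes "p \<in> wstar closure_of A" "\<And>m. finite (F m)" "\<And>m. 0 < e m"
  obtains y where "y \<in> A" "y \<in> (\<Inter>m\<le>n. wstar_ball p (F m) (e m))"
proof -
  have "openin wstar (\<Inter>m\<le>n. wstar_ball p (F m) (e m))"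
    using assms(2) by (intro openin_INT2 openin_wstar_ball) auto
  moreover have "p \<in> (\<Inter>m\<le>n. wstar_ball p (F m) (e m))"
    using assms(3) by simp
  ultimately show thesis
    using assms(1) that unfolding in_closure_of by blast
qed

lemma seq_limit_in_Inter_wstar_closure:
  fixes C :: "nat \<Rightarrow> 'a::real_normed_vector set"
  assumes "decseq C" "bounded (C 0)"
    and metrizable: "metrizable_space (subtopology wstar (\<Inter>n. wstar_closure (C n)))"
    and g: "g \<in> (\<Inter>n. wstar_closure (C n))"
  obtains c where "\<And>n. c n \<in> C n" "limitin wstar (\<lambda>n. canon (c n)) g sequentially"
proof -
  obtain F e where Fe: "\<And>m::nat. finite (F m)" "\<And>m. 0 < e m"
    and separating: "\<And>h. h \<in> (\<Inter>n. wstar_closure (C n)) \<Longrightarrow>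
      (\<And>m. h \<in> wstar_cball g (F m) (e m)) \<Longrightarrow> h = g"
    using metrizable_wstar_separating_cballs[OF metrizable g] by blast
  have "\<exists>x. x \<in> C n \<and> canon x \<in> (\<Inter>m\<le>n. wstar_ball g (F m) (e m))" for n
  proof -
    have "g \<in> wstar closure_of (canon ` C n)"
      using g by (simp add: wstar_closure_def)
    then show ?thesis
      by (rule wstar_closure_ofE[where F=F and e=e and n=n, OF _ Fe]) blast
  qed
  then obtain c where c: "\<And>n. c n \<in> C n" "\<And>n. canon (c n) \<in> (\<Inter>m\<le>n. wstar_ball g (F m) (e m))"
    by metis
  have "limitin wstar (\<lambda>n. canon (c n)) g sequentially"
    by (rule limitin_wstar_if_separating_cballs[OF assms(1,2) c(1) separating]) (use c(2) in auto)
  with c(1) show thesis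
    by (rule that)
qed

lemma subseq_limit_in_Inter_wstar_closure:
  fixes C :: "nat \<Rightarrow> 'a::real_normed_vector set"
  assumes "decseq C" "bounded (C 0)"
    and metrizable: "metrizable_space (subtopology wstar (\<Inter>n. wstar_closure (C n)))"
    and c: "\<And>n. c n \<in> C n"
  obtains r g where "strict_mono r" "limitin wstar (\<lambda>n. canon (c (r n))) g sequentially"
proof -
  have "range c \<subseteq> C 0"
    using assms(1) c by (auto simp: decseq_def)
  then have "bounded (range (\<lambda>n. canon (c n)))"
    by (intro bounded_range_canon bounded_subset[OF assms(2)])
  then obtain p where p: "p \<in> wstar_cluster (\<lambda>n. canon (c n)) UNIV"
    using wstar_cluster_nonempty by blast
  then have "p \<in> (\<Inter>n. wstar_closure (C n))"
    using wstar_cluster_subset_Inter_wstar_closure[OF assms(1) c] by blast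
  then obtain F e where Fe: "\<And>m::nat. finite (F m)" "\<And>m. 0 < e m"
    and separating: "\<And>h. h \<in> (\<Inter>n. wstar_closure (C n)) \<Longrightarrow>
      (\<And>m. h \<in> wstar_cball p (F m) (e m)) \<Longrightarrow> h = p"
    using metrizable_wstar_separating_cballs[OF metrizable] by blast
  have frequent: "\<exists>i\<ge>N. canon (c i) \<in> (\<Inter>m\<le>n. wstar_ball p (F m) (e m))" for n N
  proof -
    have "p \<in> wstar closure_of ((\<lambda>n. canon (c n)) ` {i. N \<le> i})"
      using p by (simp add: wstar_cluster_def)
    then show ?thesis
      by (rule wstar_closure_ofE[where F=F and e=e and n=n, OF _ Fe]) blast
  qed
  obtain r where r: "strict_mono r" "\<And>n. canon (c (r n)) \<in> (\<Inter>m\<le>n. wstar_ball p (F m) (e m))"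
    using strict_mono_choice[where P="\<lambda>n i. canon (c i) \<in> (\<Inter>m\<le>n. wstar_ball p (F m) (e m))"] frequent
    by blast
  have "c (r n) \<in> C n" for n
    using assms(1) c seq_suble[OF r(1)] by (auto simp: decseq_def)
  then have "limitin wstar (\<lambda>n. canon (c (r n))) p sequentially"
    by (rule limitin_wstar_if_separating_cballs[OF assms(1,2) _ separating]) (use r(2) in auto)
  with r(1) show thesis
    by (rule that)
qed

theorem lemma1:
  fixes C :: "nat \<Rightarrow> 'a::banach set"
  assumes bdd: "\<And>n. bounded (C n)"
    and cl: "\<And>n. closed (C n)"
    and cvx: "\<And>n. convex (C n)"
    and nested: "\<And>n. C (Suc n) \<subseteq> C n"
    and metr: "metrizable_space (subtopology wstar (\<Inter>n. wstar_closure (C n)))"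
  shows "(\<forall>g \<in> (\<Inter>n. wstar_closure (C n)). \<exists>c. (\<forall>n. c n \<in> C n) \<and>
            limitin wstar (\<lambda>n. canon (c n)) g sequentially)
       \<and> (\<forall>c. (\<forall>n. c n \<in> C n) \<longrightarrow>
            (\<exists>r g. strict_mono r \<and> limitin wstar (\<lambda>n. canon (c (r n))) g sequentially))"
proof -
  have "decseq C"
    using nested by (simp add: decseq_Suc_iff)
  show ?thesis
  proof (intro conjI ballI allI impI)
    fix g assume "g \<in> (\<Inter>n. wstar_closure (C n))"
    then show "\<exists>c. (\<forall>n. c n \<in> C n) \<and> limitin wstar (\<lambda>n. canon (c n)) g sequentially"
      by (metis seq_limit_in_Inter_wstar_closure[OF \<open>decseq C\<close> bdd metr])
  next
    fix c assume "\<forall>n. c n \<in> C n"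
    then show "\<exists>r g. strict_mono r \<and> limitin wstar (\<lambda>n. canon (c (r n))) g sequentially"
      by (metis subseq_limit_in_Inter_wstar_closure[OF \<open>decseq C\<close> bdd metr])
  qed
qed

end
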